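(* Let $\mathcal G$ be a partition of $[n]$ into sets of size $\tau$, and let $S$ be the $\tau$-partition sampling ($\Pr(S=C)=\tau/n$ for $C\in\mathcal G$). Let $\mathbf W=\mathrm{diag}(w_1,\dots,w_n)\succ0$, $\mathbf S=\mathbf I_S$ and $\theta_{\mathbf S}=\frac{1}{c_1p_S}=\frac{n}{\tau}$ (here $c_1=1$). Then the sketch residual satisfies $$\rho\le\frac n\tau\max_{C\in\mathcal G}\sum_{i\in C}w_i.$$
   Context: $\mathbf I_S$ is the column submatrix of the $n\times n$ identity with columns indexed by $S$; $e$ is the all-ones vector; $\Pi_{\mathbf S}=\mathbf S(\mathbf S^\top\mathbf W\mathbf S)^\dagger\mathbf S^\top\mathbf W$; the sketch residual is $\rho=\lambda_{\max}\big(\mathbf W^{1/2}(\mathbb{E}[\theta_{\mathbf S}^2\Pi_{\mathbf S}ee^\top\Pi_{\mathbf S}^\top]-ee^\top)\mathbf W^{1/2}\big)$. *)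

theory Defs
  imports "Jordan_Normal_Form.Char_Poly"
begin

text \<open>Real matrices are Jordan_Normal_Form matrices; indices of [n] are 0..n-1.\<close>

text \<open>Column submatrix of the n x n identity with columns indexed by S (increasing order).\<close>
definition idcols :: "nat \<Rightarrow> nat set \<Rightarrow> real mat" where
  "idcols n S = mat n (card S) (\<lambda>(i,j). if i = sorted_list_of_set S ! j then 1 else 0)"

text \<open>Moore-Penrose pseudoinverse (real case: conjugate transpose = transpose).\<close>
definition is_pinv :: "real mat \<Rightarrow> real mat \<Rightarrow> bool" where
  "is_pinv A X \<longleftrightarrow> X \<in> carrier_mat (dim_col A) (dim_row A) \<and>
     A * X * A = A \<and> X * A * X = X \<and>
     transpose_mat (A * X) = A * X \<and> transpose_mat (X * A) = X * A"

definition pinv :: "real mat \<Rightarrow> real mat" where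
  "pinv A = (THE X. is_pinv A X)"

definition psd :: "real mat \<Rightarrow> bool" where
  "psd A \<longleftrightarrow> A \<in> carrier_mat (dim_row A) (dim_row A) \<and> transpose_mat A = A \<and>
     (\<forall>v \<in> carrier_vec (dim_row A). v \<bullet> (A *\<^sub>v v) \<ge> 0)"

definition mat_sqrt :: "real mat \<Rightarrow> real mat" where
  "mat_sqrt A = (THE X. psd X \<and> X \<in> carrier_mat (dim_row A) (dim_row A) \<and> X * X = A)"

definition lambda_max :: "real mat \<Rightarrow> real" where
  "lambda_max A = Max {k. eigenvalue A k}"

definition proj_S :: "real mat \<Rightarrow> real mat \<Rightarrow> real mat" where
  "proj_S W S = S * pinv (transpose_mat S * W * S) * transpose_mat S * W"

definition ones_vec :: "nat \<Rightarrow> real vec" where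
  "ones_vec n = vec n (\<lambda>_. 1)"

definition outer :: "real vec \<Rightarrow> real vec \<Rightarrow> real mat" where
  "outer u v = mat (dim_vec u) (dim_vec v) (\<lambda>(i,j). u $ i * v $ j)"

text \<open>Sketch residual for a random sketch S = I_C, C drawn from the finite support Omega
  with probabilities p C, and weights theta C:
  rho = lambda_max (W^(1/2) (E[theta^2 Pi e e^T Pi^T] - e e^T) W^(1/2)).\<close>
definition sketch_residual ::
  "nat \<Rightarrow> real mat \<Rightarrow> nat set set \<Rightarrow> (nat set \<Rightarrow> real) \<Rightarrow> (nat set \<Rightarrow> real) \<Rightarrow> real" where
  "sketch_residual n W \<Omega> p \<theta> =
     (let E = mat n n (\<lambda>(i,j). \<Sum>C\<in>\<Omega>. p C * (\<theta> C)\<^sup>2 *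
                 (outer (proj_S W (idcols n C) *\<^sub>v ones_vec n) (proj_S W (idcols n C) *\<^sub>v ones_vec n)) $$ (i,j));
          Wh = mat_sqrt W
      in lambda_max (Wh * (E - outer (ones_vec n) (ones_vec n)) * Wh))"

end

theory Submission
  imports Defs "HOL-Analysis.Convex" "HOL-Library.Disjoint_Sets"
begin

(* For diagonal W the projection Pi_S of the sketch S = I_C is the coordinate projection
   onto C, so Pi_S e is the indicator vector 1_C and the expectation in rho equals
   (n/tau) sum_C 1_C 1_C^T. Since W^(1/2) = diag (sqrt w), the quadratic form of the
   residual matrix at v is
     (n/tau) sum_C (sum_{i in C} sqrt (w i) v_i)^2 - (sum_i sqrt (w i) v_i)^2,
   and Cauchy-Schwarz on each block bounds it by (n/tau) max_C (sum_{i in C} w i) |v|^2.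
   This bounds every eigenvalue, hence lambda_max. *)

lemma mat_diag_index [simp]:
  "i < n \<Longrightarrow> j < n \<Longrightarrow> mat_diag n f $$ (i, j) = (if i = j then f i else 0)"
  by (simp add: mat_diag_def)

lemma transpose_mat_diag [simp]: "transpose_mat (mat_diag n f) = mat_diag n f"
  by (auto simp: mat_diag_def intro!: eq_matI)

lemma dim_mat_diag [simp]: "dim_row (mat_diag n f) = n" "dim_col (mat_diag n f) = n"
  by (simp_all add: mat_diag_def)

lemma mat_diag_cong: "(\<And>i. i < n \<Longrightarrow> f i = g i) \<Longrightarrow> mat_diag n f = mat_diag n g"
  by (auto simp: mat_diag_def intro!: eq_matI)

lemma mat_diag_mult_vec:
  assumes "v \<in> carrier_vec n"
  shows "mat_diag n f *\<^sub>v v = vec n (\<lambda>i. f i * v $ i)"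
proof (rule eq_vecI)
  fix i assume "i < dim_vec (vec n (\<lambda>i. f i * v $ i))"
  then have i: "i < n" by simp
  have "(mat_diag n f *\<^sub>v v) $ i = (\<Sum>j\<in>{0..<n}. (if i = j then f j else 0) * v $ j)"
    using i assms by (simp add: mat_diag_def scalar_prod_def)
  also have "\<dots> = (\<Sum>j\<in>{0..<n}. if i = j then f j * v $ j else 0)"
    by (rule sum.cong) auto
  also have "\<dots> = f i * v $ i"
    using i by simp
  finally show "(mat_diag n f *\<^sub>v v) $ i = vec n (\<lambda>i. f i * v $ i) $ i"
    using i by simp
qed (use assms in auto)

lemma quadratic_form_mat_diag:
  fixes f :: "nat \<Rightarrow> real"
  assumes "v \<in> carrier_vec n"
  shows "v \<bullet> (mat_diag n f *\<^sub>v v) = (\<Sum>i\<in>{0..<n}. f i * (v $ i)\<^sup>2)"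
proof -
  have "v \<bullet> (mat_diag n f *\<^sub>v v) = (\<Sum>i\<in>{0..<n}. v $ i * (f i * v $ i))"
    using assms by (simp add: mat_diag_mult_vec scalar_prod_def)
  also have "\<dots> = (\<Sum>i\<in>{0..<n}. f i * (v $ i)\<^sup>2)"
    by (simp add: power2_eq_square mult.left_commute)
  finally show ?thesis .
qed

lemma psd_mat_diag:
  fixes f :: "nat \<Rightarrow> real"
  assumes "\<And>i. i < n \<Longrightarrow> 0 \<le> f i"
  shows "psd (mat_diag n f)"
  using assms by (auto simp: psd_def quadratic_form_mat_diag intro!: sum_nonneg)

lemma positive_definite_mat_diag:
  fixes f :: "nat \<Rightarrow> real"
  assumes f: "\<And>i. i < n \<Longrightarrow> 0 < f i" and v: "v \<in> carrier_vec n" "v \<noteq> 0\<^sub>v n"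
  shows "0 < v \<bullet> (mat_diag n f *\<^sub>v v)"
proof -
  obtain i where i: "i < n" "v $ i \<noteq> 0"
    using v by (metis carrier_vecD eq_vecI index_zero_vec)
  have "0 < (\<Sum>i\<in>{0..<n}. f i * (v $ i)\<^sup>2)"
    using f i by (intro sum_pos2[where i = i]) (auto intro!: mult_nonneg_nonneg less_imp_le[OF f])
  then show ?thesis
    using v by (simp add: quadratic_form_mat_diag)
qed

lemma pinv_eqI:
  assumes A: "A \<in> carrier_mat n n" and B: "B \<in> carrier_mat n n"
    and AB: "A * B = 1\<^sub>m n" and BA: "B * A = 1\<^sub>m n"
  shows "pinv A = B"
  unfolding pinv_def
proof (rule the_equality)
  show "is_pinv A B"
    using A B AB BA by (simp add: is_pinv_def)
next
  fix X assume "is_pinv A X"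
  then have X: "X \<in> carrier_mat n n" and AXA: "A * X * A = A"
    using A by (auto simp: is_pinv_def)
  have "X = (B * A) * X * (A * B)"
    using X by (simp add: AB BA)
  also have "\<dots> = B * (A * X * A) * B"
    using A B X by (simp add: assoc_mult_mat[of _ n n _ n _ n])
  also have "\<dots> = B"
    using A B by (simp add: AXA BA)
  finally show "X = B" .
qed

lemma pinv_mat_diag:
  fixes f :: "nat \<Rightarrow> real"
  assumes "\<And>i. i < n \<Longrightarrow> f i \<noteq> 0"
  shows "pinv (mat_diag n f) = mat_diag n (\<lambda>i. 1 / f i)"
  using assms by (intro pinv_eqI[of _ n]) (auto simp flip: mat_diag_one intro!: mat_diag_cong)

lemma idcols_carrier [simp]: "idcols n C \<in> carrier_mat n (card C)"
  by (simp add: idcols_def)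

lemma dim_idcols [simp]: "dim_row (idcols n C) = n" "dim_col (idcols n C) = card C"
  by (simp_all add: idcols_def)

lemma idcols_index:
  "i < n \<Longrightarrow> k < card C \<Longrightarrow> idcols n C $$ (i, k) = of_bool (i = sorted_list_of_set C ! k)"
  by (simp add: idcols_def)

lemma sorted_list_of_set_nth_less:
  fixes n :: nat
  assumes "C \<subseteq> {0..<n}" "k < card C"
  shows "sorted_list_of_set C ! k < n"
proof -
  have "finite C"
    using assms(1) by (rule finite_subset) simp
  then have "sorted_list_of_set C ! k \<in> C"
    using nth_mem[of k "sorted_list_of_set C"] assms(2) by simp
  then show ?thesis
    using assms(1) by (meson atLeastLessThan_iff subsetD)
qed

lemma sum_of_bool_delta:
  fixes g :: "'a \<Rightarrow> 'b :: semiring_1"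
  assumes "finite A"
  shows "(\<Sum>x\<in>A. of_bool (i = x) * g x * of_bool (j = x)) = of_bool (i = j \<and> i \<in> A) * g i"
proof -
  have "(\<Sum>x\<in>A. of_bool (i = x) * g x * of_bool (j = x)) = (\<Sum>x\<in>A. if x = i then of_bool (j = i) * g i else 0)"
    by (rule sum.cong) auto
  then show ?thesis
    using assms by (simp add: sum.delta')
qed

lemma idcols_gram_mat_diag:
  assumes C: "C \<subseteq> {0..<n}"
  shows "transpose_mat (idcols n C) * mat_diag n f * idcols n C
           = mat_diag (card C) (\<lambda>k. f (sorted_list_of_set C ! k))"
proof -
  let ?s = "sorted_list_of_set C"
  have "transpose_mat (idcols n C) * mat_diag n f
          = mat (card C) n (\<lambda>(k, i). idcols n C $$ (i, k) * f i)"
    by (subst mat_diag_mult_right[of _ "card C"]) (auto intro!: eq_matI)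
  also have "\<dots> * idcols n C = mat_diag (card C) (\<lambda>k. f (?s ! k))"
  proof (rule eq_matI)
    fix k l assume "k < dim_row (mat_diag (card C) (\<lambda>k. f (?s ! k)))"
      "l < dim_col (mat_diag (card C) (\<lambda>k. f (?s ! k)))"
    then have kl: "k < card C" "l < card C" by auto
    have "(mat (card C) n (\<lambda>(k, i). idcols n C $$ (i, k) * f i) * idcols n C) $$ (k, l)
            = (\<Sum>i\<in>{0..<n}. of_bool (i = ?s ! k) * f i * of_bool (i = ?s ! l))"
      using kl by (auto simp: scalar_prod_def idcols_index intro!: sum.cong)
    also have "\<dots> = of_bool (?s ! k = ?s ! l) * f (?s ! k)"
      using sorted_list_of_set_nth_less[OF C kl(1)] by (simp add: sum_of_bool_delta)
    also have "\<dots> = mat_diag (card C) (\<lambda>k. f (?s ! k)) $$ (k, l)"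
      using kl C finite_subset[OF C] by (simp add: nth_eq_iff_index_eq)
    finally show "(mat (card C) n (\<lambda>(k, i). idcols n C $$ (i, k) * f i) * idcols n C) $$ (k, l)
                    = mat_diag (card C) (\<lambda>k. f (?s ! k)) $$ (k, l)" .
  qed auto
  finally show ?thesis .
qed

lemma idcols_mat_diag_transpose:
  assumes C: "C \<subseteq> {0..<n}"
  shows "idcols n C * mat_diag (card C) (\<lambda>k. g (sorted_list_of_set C ! k)) * transpose_mat (idcols n C)
           = mat_diag n (\<lambda>i. if i \<in> C then g i else 0)"
proof -
  let ?s = "sorted_list_of_set C"
  have finC: "finite C"
    using C finite_subset by blast
  have "idcols n C * mat_diag (card C) (\<lambda>k. g (?s ! k))
          = mat n (card C) (\<lambda>(i, k). idcols n C $$ (i, k) * g (?s ! k))"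
    by (rule mat_diag_mult_right) simp
  also have "\<dots> * transpose_mat (idcols n C) = mat_diag n (\<lambda>i. if i \<in> C then g i else 0)"
  proof (rule eq_matI)
    fix i l assume "i < dim_row (mat_diag n (\<lambda>i. if i \<in> C then g i else 0))"
      "l < dim_col (mat_diag n (\<lambda>i. if i \<in> C then g i else 0))"
    then have il: "i < n" "l < n" by auto
    have "(mat n (card C) (\<lambda>(i, k). idcols n C $$ (i, k) * g (?s ! k)) * transpose_mat (idcols n C)) $$ (i, l)
            = (\<Sum>k\<in>{..<length ?s}. of_bool (i = ?s ! k) * g (?s ! k) * of_bool (l = ?s ! k))"
      using il finC by (auto simp: scalar_prod_def idcols_index atLeast0LessThan intro!: sum.cong)
    also have "\<dots> = (\<Sum>x\<in>C. of_bool (i = x) * g x * of_bool (l = x))"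
      using finC by (intro sum.reindex_bij_betw bij_betw_nth) auto
    also have "\<dots> = mat_diag n (\<lambda>i. if i \<in> C then g i else 0) $$ (i, l)"
      using il finC by (simp add: sum_of_bool_delta)
    finally show "(mat n (card C) (\<lambda>(i, k). idcols n C $$ (i, k) * g (?s ! k))
                     * transpose_mat (idcols n C)) $$ (i, l)
                   = mat_diag n (\<lambda>i. if i \<in> C then g i else 0) $$ (i, l)" .
  qed auto
  finally show ?thesis .
qed

lemma proj_S_idcols_mat_diag:
  fixes w :: "nat \<Rightarrow> real"
  assumes C: "C \<subseteq> {0..<n}" and w: "\<And>i. i < n \<Longrightarrow> w i \<noteq> 0"
  shows "proj_S (mat_diag n w) (idcols n C) = mat_diag n (\<lambda>i. of_bool (i \<in> C))"
proof -
  have "pinv (transpose_mat (idcols n C) * mat_diag n w * idcols n C)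
          = mat_diag (card C) (\<lambda>k. 1 / w (sorted_list_of_set C ! k))"
    unfolding idcols_gram_mat_diag[OF C]
    using w sorted_list_of_set_nth_less[OF C] by (simp add: pinv_mat_diag)
  then have "proj_S (mat_diag n w) (idcols n C)
               = mat_diag n (\<lambda>i. if i \<in> C then 1 / w i else 0) * mat_diag n w"
    by (simp add: proj_S_def idcols_mat_diag_transpose[OF C, of "\<lambda>i. 1 / w i"])
  also have "\<dots> = mat_diag n (\<lambda>i. of_bool (i \<in> C))"
    using w by (auto intro!: mat_diag_cong)
  finally show ?thesis .
qed

lemma commute_mat_diag_iff:
  assumes X: "X \<in> carrier_mat n n"
  shows "X * mat_diag n f = mat_diag n f * X
           \<longleftrightarrow> (\<forall>i<n. \<forall>k<n. X $$ (i, k) * f k = f i * X $$ (i, k))"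
  using X by (auto simp: mat_diag_mult_left[OF X] mat_diag_mult_right[OF X] mat_eq_iff)

lemma commute_mat_diag_comp:
  fixes X :: "'a :: idom mat"
  assumes X: "X \<in> carrier_mat n n" and comm: "X * mat_diag n f = mat_diag n f * X"
  shows "X * mat_diag n (\<lambda>i. g (f i)) = mat_diag n (\<lambda>i. g (f i)) * X"
proof -
  have "X $$ (i, k) * g (f k) = g (f i) * X $$ (i, k)" if "i < n" "k < n" for i k
  proof (cases "X $$ (i, k) = 0")
    case False
    moreover have "X $$ (i, k) * f k = X $$ (i, k) * f i"
      using comm that by (auto simp: commute_mat_diag_iff[OF X] mult.commute)
    ultimately have "f k = f i"
      by simp
    then show ?thesis
      by (simp add: mult.commute)
  qed simp
  then show ?thesis
    by (simp add: commute_mat_diag_iff[OF X])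
qed

lemma psd_square_root_unique:
  fixes X S :: "real mat"
  assumes X: "X \<in> carrier_mat n n" and S: "S \<in> carrier_mat n n" and "psd X"
    and S_pd: "\<And>v. v \<in> carrier_vec n \<Longrightarrow> v \<noteq> 0\<^sub>v n \<Longrightarrow> 0 < v \<bullet> (S *\<^sub>v v)"
    and comm: "X * S = S * X" and sq: "X * X = S * S"
  shows "X = S"
proof (rule eq_matI)
  (* (X + S) (X - S) = X^2 - S^2 = 0, so every column z of X - S has z.Xz + z.Sz = 0. *)
  have XpS: "X + S \<in> carrier_mat n n" and XmS: "X - S \<in> carrier_mat n n"
    using X S by auto
  have "(X + S) * (X - S) = S * S + S * X - (S * X + S * S)"
    using X S by (simp add: add_mult_distrib_mat[of _ n n] mult_minus_distrib_mat[of _ n n] comm sq)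
  also have "\<dots> = 0\<^sub>m n n"
    using X S by (intro eq_matI) auto
  finally have prod_zero: "(X + S) * (X - S) = 0\<^sub>m n n" .
  fix i k assume "i < dim_row S" "k < dim_col S"
  then have ik: "i < n" "k < n"
    using S by auto
  define z where "z = col (X - S) k"
  have z: "z \<in> carrier_vec n"
    using col_carrier_vec[OF ik(2) XmS] by (simp add: z_def)
  have "(X + S) *\<^sub>v z = col ((X + S) * (X - S)) k"
    using col_mult2[OF XpS XmS ik(2)] by (simp add: z_def)
  also have "\<dots> = 0\<^sub>v n"
    using ik by (simp add: prod_zero)
  finally have "z \<bullet> ((X + S) *\<^sub>v z) = 0"
    using z by simp
  then have "z \<bullet> (X *\<^sub>v z) + z \<bullet> (S *\<^sub>v z) = 0"
    using add_mult_distrib_mat_vec[OF X S z] scalar_prod_add_distrib[OF z] X S z by simp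
  moreover have "0 \<le> z \<bullet> (X *\<^sub>v z)"
    using \<open>psd X\<close> X z by (auto simp: psd_def)
  ultimately have "\<not> 0 < z \<bullet> (S *\<^sub>v z)"
    by linarith
  then have "z = 0\<^sub>v n"
    using S_pd[OF z] by blast
  then have "z $ i = 0"
    using ik by simp
  then show "X $$ (i, k) = S $$ (i, k)"
    using X S ik by (simp add: z_def)
qed (use X S in auto)

lemma mat_sqrt_mat_diag:
  fixes w :: "nat \<Rightarrow> real"
  assumes w: "\<And>i. i < n \<Longrightarrow> 0 < w i"
  shows "mat_sqrt (mat_diag n w) = mat_diag n (\<lambda>i. sqrt (w i))"
  unfolding mat_sqrt_def dim_mat_diag
proof (rule the_equality)
  let ?S = "mat_diag n (\<lambda>i. sqrt (w i))"
  have SS: "?S * ?S = mat_diag n w"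
    unfolding mat_diag_diag using w by (intro mat_diag_cong) (simp add: abs_of_pos)
  show "psd ?S \<and> ?S \<in> carrier_mat n n \<and> ?S * ?S = mat_diag n w"
    using w by (auto simp: SS less_imp_le intro!: psd_mat_diag)
  fix X assume "psd X \<and> X \<in> carrier_mat n n \<and> X * X = mat_diag n w"
  then have "psd X" and X: "X \<in> carrier_mat n n" and XX: "X * X = mat_diag n w"
    by auto
  have "X * mat_diag n w = mat_diag n w * X"
    using X by (simp flip: XX)
  then have comm: "X * ?S = ?S * X"
    by (rule commute_mat_diag_comp[OF X])
  have pd: "\<And>v. v \<in> carrier_vec n \<Longrightarrow> v \<noteq> 0\<^sub>v n \<Longrightarrow> 0 < v \<bullet> (?S *\<^sub>v v)"
    using w by (intro positive_definite_mat_diag) auto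
  show "X = ?S"
    by (rule psd_square_root_unique[OF X mat_diag_dim \<open>psd X\<close> pd comm XX[folded SS]])
qed

lemma finite_eigenvalues:
  fixes A :: "'a :: field mat"
  assumes A: "A \<in> carrier_mat n n"
  shows "finite {k. eigenvalue A k}"
proof -
  have "char_poly A \<noteq> 0"
    using degree_monic_char_poly[OF A] by auto
  then show ?thesis
    using poly_roots_finite by (simp add: eigenvalue_root_char_poly[OF A])
qed

lemma lambda_max_le:
  assumes A: "A \<in> carrier_mat n n" and "eigenvalue A k\<^sub>0"
    and "\<And>k. eigenvalue A k \<Longrightarrow> k \<le> b"
  shows "lambda_max A \<le> b"
  unfolding lambda_max_def using assms finite_eigenvalues[OF A] by (subst Max_le_iff) auto

lemma eigenvalue_le_of_quadratic_form_le:
  fixes A :: "real mat"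
  assumes A: "A \<in> carrier_mat n n"
    and quad: "\<And>v. v \<in> carrier_vec n \<Longrightarrow> v \<bullet> (A *\<^sub>v v) \<le> b * (v \<bullet> v)"
    and "eigenvalue A k"
  shows "k \<le> b"
proof -
  obtain v where v: "v \<in> carrier_vec n" "v \<noteq> 0\<^sub>v n" "A *\<^sub>v v = k \<cdot>\<^sub>v v"
    using \<open>eigenvalue A k\<close> A by (auto simp: eigenvalue_def eigenvector_def)
  have "0 < v \<bullet> v"
    using conjugate_square_greater_0_vec[OF v(1)] v(2) by simp
  moreover have "k * (v \<bullet> v) \<le> b * (v \<bullet> v)"
    using quad[OF v(1)] v by simp
  ultimately show ?thesis
    by simp
qed

lemma outer_mult_vec:
  assumes "v \<in> carrier_vec (dim_vec y)"
  shows "outer x y *\<^sub>v v = (y \<bullet> v) \<cdot>\<^sub>v x"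
  using assms by (intro eq_vecI) (auto simp: outer_def scalar_prod_def sum_distrib_left ac_simps)

definition weighted_outer_sum ::
    "nat \<Rightarrow> 'b set \<Rightarrow> ('b \<Rightarrow> real) \<Rightarrow> ('b \<Rightarrow> real vec) \<Rightarrow> real mat" where
  "weighted_outer_sum n \<Omega> a x = mat n n (\<lambda>(i, j). \<Sum>C\<in>\<Omega>. a C * outer (x C) (x C) $$ (i, j))"

lemma weighted_outer_sum_carrier [simp]: "weighted_outer_sum n \<Omega> a x \<in> carrier_mat n n"
  by (simp add: weighted_outer_sum_def)

lemma weighted_outer_sum_cong:
  "(\<And>C. C \<in> \<Omega> \<Longrightarrow> a C = b C \<and> x C = y C)
     \<Longrightarrow> weighted_outer_sum n \<Omega> a x = weighted_outer_sum n \<Omega> b y"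
  unfolding weighted_outer_sum_def by (intro cong_mat refl sum.cong) auto

lemma weighted_outer_sum_mult_vec:
  assumes x: "\<And>C. C \<in> \<Omega> \<Longrightarrow> x C \<in> carrier_vec n" and v: "v \<in> carrier_vec n"
  shows "weighted_outer_sum n \<Omega> a x *\<^sub>v v = vec n (\<lambda>i. \<Sum>C\<in>\<Omega>. a C * (x C \<bullet> v) * x C $ i)"
proof (rule eq_vecI)
  fix i assume "i < dim_vec (vec n (\<lambda>i. \<Sum>C\<in>\<Omega>. a C * (x C \<bullet> v) * x C $ i))"
  then have i: "i < n" by simp
  have dim: "dim_vec (x C) = n" if "C \<in> \<Omega>" for C
    using x[OF that] by simp
  have "(weighted_outer_sum n \<Omega> a x *\<^sub>v v) $ i
          = (\<Sum>j\<in>{0..<n}. (\<Sum>C\<in>\<Omega>. a C * (x C $ i * x C $ j)) * v $ j)"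
    using i v by (auto simp: weighted_outer_sum_def outer_def scalar_prod_def dim intro!: sum.cong)
  also have "\<dots> = (\<Sum>j\<in>{0..<n}. \<Sum>C\<in>\<Omega>. a C * x C $ i * (x C $ j * v $ j))"
    by (simp add: sum_distrib_left sum_distrib_right ac_simps)
  also have "\<dots> = (\<Sum>C\<in>\<Omega>. \<Sum>j\<in>{0..<n}. a C * x C $ i * (x C $ j * v $ j))"
    by (rule sum.swap)
  also have "\<dots> = vec n (\<lambda>i. \<Sum>C\<in>\<Omega>. a C * (x C \<bullet> v) * x C $ i) $ i"
    using i v x by (auto simp: scalar_prod_def sum_distrib_left ac_simps intro!: sum.cong)
  finally show "(weighted_outer_sum n \<Omega> a x *\<^sub>v v) $ i
                  = vec n (\<lambda>i. \<Sum>C\<in>\<Omega>. a C * (x C \<bullet> v) * x C $ i) $ i" .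
qed (simp add: weighted_outer_sum_def)

lemma quadratic_form_weighted_outer_sum:
  assumes x: "\<And>C. C \<in> \<Omega> \<Longrightarrow> x C \<in> carrier_vec n" and v: "v \<in> carrier_vec n"
  shows "v \<bullet> (weighted_outer_sum n \<Omega> a x *\<^sub>v v) = (\<Sum>C\<in>\<Omega>. a C * (x C \<bullet> v)\<^sup>2)"
proof -
  have "v \<bullet> (weighted_outer_sum n \<Omega> a x *\<^sub>v v)
          = (\<Sum>i\<in>{0..<n}. \<Sum>C\<in>\<Omega>. a C * (x C \<bullet> v) * (x C $ i * v $ i))"
    using v by (simp add: weighted_outer_sum_mult_vec[OF x v] scalar_prod_def sum_distrib_left ac_simps)
  also have "\<dots> = (\<Sum>C\<in>\<Omega>. \<Sum>i\<in>{0..<n}. a C * (x C \<bullet> v) * (x C $ i * v $ i))"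
    by (rule sum.swap)
  also have "\<dots> = (\<Sum>C\<in>\<Omega>. a C * (x C \<bullet> v) * (\<Sum>i\<in>{0..<n}. x C $ i * v $ i))"
    by (simp add: sum_distrib_left)
  also have "\<dots> = (\<Sum>C\<in>\<Omega>. a C * (x C \<bullet> v)\<^sup>2)"
    using x v by (intro sum.cong refl) (simp add: scalar_prod_def power2_eq_square)
  finally show ?thesis .
qed

lemma quadratic_form_sandwich:
  fixes S :: "'a :: comm_semiring_0 mat"
  assumes S: "S \<in> carrier_mat n n" "transpose_mat S = S" and M: "M \<in> carrier_mat n n"
    and v: "v \<in> carrier_vec n"
  shows "v \<bullet> ((S * M * S) *\<^sub>v v) = (S *\<^sub>v v) \<bullet> (M *\<^sub>v (S *\<^sub>v v))"
proof -
  have "(S * M * S) *\<^sub>v v = S *\<^sub>v (M *\<^sub>v (S *\<^sub>v v))"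
    using S M v by (simp add: assoc_mult_mat_vec[of _ n n _ n])
  then show ?thesis
    using transpose_vec_mult_scalar[of S n n "M *\<^sub>v (S *\<^sub>v v)" v] S M v by simp
qed

definition indicator_vec :: "nat \<Rightarrow> nat set \<Rightarrow> real vec" where
  "indicator_vec n C = vec n (\<lambda>i. of_bool (i \<in> C))"

lemma indicator_vec_carrier [simp]: "indicator_vec n C \<in> carrier_vec n"
  by (simp add: indicator_vec_def)

lemma indicator_vec_index [simp]: "i < n \<Longrightarrow> indicator_vec n C $ i = of_bool (i \<in> C)"
  by (simp add: indicator_vec_def)

lemma ones_vec_carrier [simp]: "ones_vec n \<in> carrier_vec n"
  by (simp add: ones_vec_def)

lemma indicator_vec_scalar_prod:
  assumes "C \<subseteq> {0..<n}" "v \<in> carrier_vec n"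
  shows "indicator_vec n C \<bullet> v = (\<Sum>i\<in>C. v $ i)"
proof -
  have "indicator_vec n C \<bullet> v = (\<Sum>i\<in>{0..<n}. of_bool (i \<in> C) * v $ i)"
    using assms(2) by (simp add: indicator_vec_def scalar_prod_def)
  also have "\<dots> = (\<Sum>i\<in>{0..<n}. if i \<in> C then v $ i else 0)"
    by (rule sum.cong) auto
  also have "\<dots> = (\<Sum>i\<in>{0..<n} \<inter> C. v $ i)"
    by (simp add: sum.inter_restrict)
  also have "{0..<n} \<inter> C = C"
    using assms(1) by blast
  finally show ?thesis .
qed

lemma proj_S_idcols_ones_vec:
  fixes w :: "nat \<Rightarrow> real"
  assumes "C \<subseteq> {0..<n}" and "\<And>i. i < n \<Longrightarrow> w i \<noteq> 0"
  shows "proj_S (mat_diag n w) (idcols n C) *\<^sub>v ones_vec n = indicator_vec n C"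
  using assms
  by (auto simp: proj_S_idcols_mat_diag mat_diag_mult_vec ones_vec_def indicator_vec_def intro!: eq_vecI)

lemma sketch_residual_eq:
  "sketch_residual n W \<Omega> p \<theta>
     = lambda_max (mat_sqrt W * (weighted_outer_sum n \<Omega> (\<lambda>C. p C * (\<theta> C)\<^sup>2)
           (\<lambda>C. proj_S W (idcols n C) *\<^sub>v ones_vec n) - outer (ones_vec n) (ones_vec n)) * mat_sqrt W)"
  unfolding sketch_residual_def weighted_outer_sum_def Let_def ..

lemma sum_partition_on:
  assumes P: "partition_on A G" and "finite A"
  shows "(\<Sum>C\<in>G. sum f C) = sum f A"
proof -
  have fin: "\<forall>C\<in>G. finite C"
    using assms(2) partition_onD1[OF P] by (metis Union_upper finite_subset)
  have disj: "\<forall>C\<in>G. \<forall>D\<in>G. C \<noteq> D \<longrightarrow> C \<inter> D = {}"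
    using partition_onD2[OF P] by (auto dest: disjointD)
  have "sum f (\<Union>G) = (\<Sum>C\<in>G. sum f C)"
    using sum.Union_disjoint[OF fin disj] by simp
  then show ?thesis
    using partition_onD1[OF P] by simp
qed

lemma sum_of_bool_mem_partition_on:
  assumes P: "partition_on A G" and "finite A" and "i \<in> A"
  shows "(\<Sum>C\<in>G. of_bool (i \<in> C)) = (1 :: 'a :: semiring_1)"
proof -
  have fin: "finite C" if "C \<in> G" for C
    using that assms(2) partition_onD1[OF P] by (metis Union_upper finite_subset)
  have "(\<Sum>C\<in>G. of_bool (i \<in> C) :: 'a) = (\<Sum>C\<in>G. \<Sum>j\<in>C. if j = i then 1 else 0)"
    using fin by (intro sum.cong refl) simp
  also have "\<dots> = (\<Sum>j\<in>A. if j = i then 1 else 0)"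
    by (rule sum_partition_on[OF P assms(2)])
  also have "\<dots> = 1"
    using assms(2,3) by simp
  finally show ?thesis .
qed

lemma partition_on_sum_squares_le:
  fixes w :: "nat \<Rightarrow> real"
  assumes P: "partition_on {0..<n} G" and w: "\<And>i. i < n \<Longrightarrow> 0 \<le> w i"
    and v: "v \<in> carrier_vec n"
  shows "(\<Sum>C\<in>G. (\<Sum>i\<in>C. sqrt (w i) * v $ i)\<^sup>2)
           \<le> Max ((\<lambda>C. \<Sum>i\<in>C. w i) ` G) * (v \<bullet> v)"
proof -
  let ?M = "Max ((\<lambda>C. \<Sum>i\<in>C. w i) ` G)"
  have fin: "finite G"
    by (rule finite_elements[OF finite_atLeastLessThan P])
  have block: "(\<Sum>i\<in>C. sqrt (w i) * v $ i)\<^sup>2 \<le> ?M * (\<Sum>i\<in>C. (v $ i)\<^sup>2)" if C: "C \<in> G" for C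
  proof -
    have sub: "C \<subseteq> {0..<n}"
      using P C by (auto dest: partition_onD1)
    have "(\<Sum>i\<in>C. sqrt (w i) * v $ i)\<^sup>2 \<le> (\<Sum>i\<in>C. (sqrt (w i))\<^sup>2) * (\<Sum>i\<in>C. (v $ i)\<^sup>2)"
      by (rule Cauchy_Schwarz_ineq_sum)
    also have "(\<Sum>i\<in>C. (sqrt (w i))\<^sup>2) = (\<Sum>i\<in>C. w i)"
      using sub w by (intro sum.cong) auto
    also have "(\<Sum>i\<in>C. w i) * (\<Sum>i\<in>C. (v $ i)\<^sup>2) \<le> ?M * (\<Sum>i\<in>C. (v $ i)\<^sup>2)"
      using fin C by (intro mult_right_mono Max_ge sum_nonneg) auto
    finally show ?thesis .
  qed
  have "(\<Sum>C\<in>G. (\<Sum>i\<in>C. sqrt (w i) * v $ i)\<^sup>2) \<le> (\<Sum>C\<in>G. ?M * (\<Sum>i\<in>C. (v $ i)\<^sup>2))"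
    using block by (rule sum_mono)
  also have "\<dots> = ?M * (\<Sum>i\<in>{0..<n}. (v $ i)\<^sup>2)"
    by (simp add: sum_distrib_left[symmetric] sum_partition_on[OF P])
  also have "(\<Sum>i\<in>{0..<n}. (v $ i)\<^sup>2) = v \<bullet> v"
    using v by (simp add: scalar_prod_def power2_eq_square)
  finally show ?thesis .
qed

definition partition_residual_mat ::
    "nat \<Rightarrow> (nat \<Rightarrow> real) \<Rightarrow> nat set set \<Rightarrow> real \<Rightarrow> real mat" where
  "partition_residual_mat n w G c =
     mat_diag n (\<lambda>i. sqrt (w i))
       * (weighted_outer_sum n G (\<lambda>_. c) (indicator_vec n) - outer (ones_vec n) (ones_vec n))
       * mat_diag n (\<lambda>i. sqrt (w i))"

lemma partition_residual_mat_carrier [simp]: "partition_residual_mat n w G c \<in> carrier_mat n n"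
  unfolding partition_residual_mat_def
  by (intro mult_carrier_mat minus_carrier_mat) (auto simp: outer_def ones_vec_def)

lemma quadratic_form_partition_residual_mat_le:
  fixes w :: "nat \<Rightarrow> real"
  assumes P: "partition_on {0..<n} G" and w: "\<And>i. i < n \<Longrightarrow> 0 \<le> w i" and "0 \<le> c"
    and v: "v \<in> carrier_vec n"
  shows "v \<bullet> (partition_residual_mat n w G c *\<^sub>v v) \<le> c * Max ((\<lambda>C. \<Sum>i\<in>C. w i) ` G) * (v \<bullet> v)"
proof -
  let ?S = "mat_diag n (\<lambda>i. sqrt (w i))"
  let ?E = "weighted_outer_sum n G (\<lambda>_. c) (indicator_vec n)"
  let ?J = "outer (ones_vec n) (ones_vec n)"
  define u where "u = ?S *\<^sub>v v"
  have u: "u \<in> carrier_vec n"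
    unfolding u_def by (rule mult_mat_vec_carrier[OF mat_diag_dim v])
  have J: "?J \<in> carrier_mat n n"
    by (simp add: outer_def ones_vec_def)
  have "v \<bullet> (partition_residual_mat n w G c *\<^sub>v v) = u \<bullet> ((?E - ?J) *\<^sub>v u)"
    unfolding partition_residual_mat_def u_def using J v by (intro quadratic_form_sandwich) auto
  also have "\<dots> = u \<bullet> (?E *\<^sub>v u) - u \<bullet> (?J *\<^sub>v u)"
    using J u by (simp add: minus_mult_distrib_mat_vec[of _ n n] scalar_prod_minus_distrib[OF u
        mult_mat_vec_carrier[OF weighted_outer_sum_carrier u] mult_mat_vec_carrier[OF J u]])
  also have "u \<bullet> (?J *\<^sub>v u) = (ones_vec n \<bullet> u)\<^sup>2"
    using u by (simp add: outer_mult_vec ones_vec_def comm_scalar_prod[of u n] power2_eq_square)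
  also have "u \<bullet> (?E *\<^sub>v u) = c * (\<Sum>C\<in>G. (indicator_vec n C \<bullet> u)\<^sup>2)"
    using u by (simp add: quadratic_form_weighted_outer_sum sum_distrib_left)
  also have "(\<Sum>C\<in>G. (indicator_vec n C \<bullet> u)\<^sup>2) = (\<Sum>C\<in>G. (\<Sum>i\<in>C. sqrt (w i) * v $ i)\<^sup>2)"
  proof (rule sum.cong)
    fix C assume "C \<in> G"
    then have C: "C \<subseteq> {0..<n}"
      using P by (auto dest: partition_onD1)
    have "indicator_vec n C \<bullet> u = (\<Sum>i\<in>C. u $ i)"
      by (rule indicator_vec_scalar_prod[OF C u])
    also have "\<dots> = (\<Sum>i\<in>C. sqrt (w i) * v $ i)"
      using C v by (intro sum.cong) (auto simp: u_def mat_diag_mult_vec)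
    finally show "(indicator_vec n C \<bullet> u)\<^sup>2 = (\<Sum>i\<in>C. sqrt (w i) * v $ i)\<^sup>2"
      by simp
  qed simp
  finally have "v \<bullet> (partition_residual_mat n w G c *\<^sub>v v)
                  \<le> c * (\<Sum>C\<in>G. (\<Sum>i\<in>C. sqrt (w i) * v $ i)\<^sup>2)"
    by simp
  also have "\<dots> \<le> c * (Max ((\<lambda>C. \<Sum>i\<in>C. w i) ` G) * (v \<bullet> v))"
    using partition_on_sum_squares_le[OF P w v] \<open>0 \<le> c\<close> by (rule mult_left_mono)
  finally show ?thesis
    by (simp add: mult.assoc)
qed

lemma partition_residual_mat_kernel:
  fixes w :: "nat \<Rightarrow> real"
  assumes P: "partition_on {0..<n} G" and card: "\<And>C. C \<in> G \<Longrightarrow> card C = \<tau>"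
    and c: "c * real \<tau> = real n" and w: "\<And>i. i < n \<Longrightarrow> 0 < w i"
  shows "partition_residual_mat n w G c *\<^sub>v vec n (\<lambda>i. 1 / sqrt (w i)) = 0\<^sub>v n"
proof -
  let ?S = "mat_diag n (\<lambda>i. sqrt (w i))"
  let ?E = "weighted_outer_sum n G (\<lambda>_. c) (indicator_vec n)"
  let ?J = "outer (ones_vec n) (ones_vec n)"
  have J: "?J \<in> carrier_mat n n"
    by (simp add: outer_def ones_vec_def)
  have S_inv: "?S *\<^sub>v vec n (\<lambda>i. 1 / sqrt (w i)) = ones_vec n"
    using w by (auto simp: mat_diag_mult_vec ones_vec_def intro!: eq_vecI) (metis less_irrefl)
  have block_ones: "indicator_vec n C \<bullet> ones_vec n = real \<tau>" if "C \<in> G" for C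
  proof -
    have C: "C \<subseteq> {0..<n}"
      using P that by (auto dest: partition_onD1)
    have "indicator_vec n C \<bullet> ones_vec n = (\<Sum>i\<in>C. ones_vec n $ i)"
      using C by (simp add: indicator_vec_scalar_prod)
    also have "\<dots> = (\<Sum>i\<in>C. 1)"
      using C by (intro sum.cong) (auto simp: ones_vec_def)
    finally show ?thesis
      using card[OF that] by simp
  qed
  have "?E *\<^sub>v ones_vec n
          = vec n (\<lambda>i. \<Sum>C\<in>G. c * (indicator_vec n C \<bullet> ones_vec n) * indicator_vec n C $ i)"
    by (simp add: weighted_outer_sum_mult_vec)
  also have "\<dots> = vec n (\<lambda>i. \<Sum>C\<in>G. c * real \<tau> * of_bool (i \<in> C))"
    by (intro eq_vecI) (auto simp: block_ones intro!: sum.cong)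
  also have "\<dots> = real n \<cdot>\<^sub>v ones_vec n"
    using P c by (auto simp: sum_distrib_left[symmetric] sum_of_bool_mem_partition_on ones_vec_def
        intro!: eq_vecI)
  also have "\<dots> = ?J *\<^sub>v ones_vec n"
    by (simp add: outer_mult_vec ones_vec_def scalar_prod_def)
  finally have kernel: "(?E - ?J) *\<^sub>v ones_vec n = 0\<^sub>v n"
    using J by (simp add: minus_mult_distrib_mat_vec[of _ n n])
  have M: "?E - ?J \<in> carrier_mat n n"
    using J by (intro minus_carrier_mat) simp_all
  have y: "vec n (\<lambda>i. 1 / sqrt (w i)) \<in> carrier_vec n"
    by simp
  have "partition_residual_mat n w G c *\<^sub>v vec n (\<lambda>i. 1 / sqrt (w i))
          = ?S *\<^sub>v ((?E - ?J) *\<^sub>v ones_vec n)"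
    unfolding partition_residual_mat_def assoc_mult_mat_vec[OF mult_carrier_mat[OF mat_diag_dim M] mat_diag_dim y]
      S_inv assoc_mult_mat_vec[OF mat_diag_dim M ones_vec_carrier] ..
  also have "\<dots> = 0\<^sub>v n"
    by (auto simp: kernel mat_diag_mult_vec intro!: eq_vecI)
  finally show ?thesis .
qed

lemma lambda_max_partition_residual_mat_le:
  fixes w :: "nat \<Rightarrow> real"
  assumes "0 < n" and P: "partition_on {0..<n} G" and card: "\<And>C. C \<in> G \<Longrightarrow> card C = \<tau>"
    and c: "c * real \<tau> = real n" "0 \<le> c" and w: "\<And>i. i < n \<Longrightarrow> 0 < w i"
  shows "lambda_max (partition_residual_mat n w G c) \<le> c * Max ((\<lambda>C. \<Sum>i\<in>C. w i) ` G)"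
proof -
  let ?K = "partition_residual_mat n w G c"
  (* lambda_max is a Max over the eigenvalues, unspecified if there are none: W^(-1/2) e
     supplies the eigenvalue 0. *)
  let ?y = "vec n (\<lambda>i. 1 / sqrt (w i))"
  have "?y $ 0 \<noteq> 0\<^sub>v n $ 0"
    using \<open>0 < n\<close> w[of 0] by simp
  then have "?y \<noteq> 0\<^sub>v n"
    by metis
  moreover have "?K *\<^sub>v ?y = 0 \<cdot>\<^sub>v ?y"
    using partition_residual_mat_kernel[OF P card c(1) w] by (auto intro!: eq_vecI)
  ultimately have "eigenvalue ?K 0"
    unfolding eigenvalue_def eigenvector_def by (intro exI[of _ ?y]) (simp add: partition_residual_mat_def)
  moreover have "k \<le> c * Max ((\<lambda>C. \<Sum>i\<in>C. w i) ` G)" if "eigenvalue ?K k" for k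
    using quadratic_form_partition_residual_mat_le[OF P less_imp_le[OF w] c(2)] that
    by (rule eigenvalue_le_of_quadratic_form_le[OF partition_residual_mat_carrier])
  ultimately show ?thesis
    by (rule lambda_max_le[OF partition_residual_mat_carrier])
qed

lemma sketch_residual_partition_sampling:
  fixes w :: "nat \<Rightarrow> real"
  assumes "0 < n" "0 < \<tau>" and G: "\<And>C. C \<in> G \<Longrightarrow> C \<subseteq> {0..<n}"
    and w: "\<And>i. i < n \<Longrightarrow> 0 < w i"
  shows "sketch_residual n (mat_diag n w) G (\<lambda>C. real \<tau> / real n) (\<lambda>C. real n / real \<tau>)
           = lambda_max (partition_residual_mat n w G (real n / real \<tau>))"
proof -
  have "real \<tau> / real n * (real n / real \<tau>)\<^sup>2 = real n / real \<tau>"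
    using assms(1,2) by (simp add: power2_eq_square)
  moreover have "proj_S (mat_diag n w) (idcols n C) *\<^sub>v ones_vec n = indicator_vec n C" if "C \<in> G" for C
    by (rule proj_S_idcols_ones_vec[OF G[OF that]]) (metis w less_irrefl)
  ultimately have "weighted_outer_sum n G (\<lambda>C. real \<tau> / real n * (real n / real \<tau>)\<^sup>2)
                     (\<lambda>C. proj_S (mat_diag n w) (idcols n C) *\<^sub>v ones_vec n)
                   = weighted_outer_sum n G (\<lambda>_. real n / real \<tau>) (indicator_vec n)"
    by (intro weighted_outer_sum_cong) simp
  moreover have "mat_sqrt (mat_diag n w) = mat_diag n (\<lambda>i. sqrt (w i))"
    using w by (rule mat_sqrt_mat_diag)
  ultimately show ?thesis
    by (simp add: sketch_residual_eq partition_residual_mat_def)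
qed

theorem theorem4p18:
  fixes n \<tau> :: nat and G :: "nat set set" and w :: "nat \<Rightarrow> real"
  assumes n_pos: "0 < n"
    and part_cover: "\<Union>G = {0..<n}"
    and part_nonempty: "\<forall>C\<in>G. C \<noteq> {}"
    and part_disj: "\<forall>C\<in>G. \<forall>D\<in>G. C \<noteq> D \<longrightarrow> C \<inter> D = {}"
    and part_size: "\<forall>C\<in>G. card C = \<tau>"
    and w_pos: "\<forall>i<n. 0 < w i"
  shows "sketch_residual n (mat n n (\<lambda>(i,j). if i = j then w i else 0)) G
            (\<lambda>C. real \<tau> / real n) (\<lambda>C. real n / real \<tau>)
         \<le> real n / real \<tau> * Max ((\<lambda>C. \<Sum>i\<in>C. w i) ` G)"
proof -
  have P: "partition_on {0..<n} G"
    using part_cover part_nonempty part_disj by (auto simp: partition_on_def disjoint_def)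
  obtain C where C: "C \<in> G" "0 \<in> C"
    using part_cover n_pos by (metis UnionE atLeastLessThan_iff le0)
  have "C \<subseteq> {0..<n}"
    using C(1) part_cover by blast
  then have "finite C"
    by (rule finite_subset) simp
  then have "0 < \<tau>"
    using C part_size by (auto simp: card_gt_0_iff)
  have W: "mat n n (\<lambda>(i,j). if i = j then w i else 0) = mat_diag n w"
    by (auto simp: mat_diag_def)
  have "sketch_residual n (mat_diag n w) G (\<lambda>C. real \<tau> / real n) (\<lambda>C. real n / real \<tau>)
          = lambda_max (partition_residual_mat n w G (real n / real \<tau>))"
    using n_pos \<open>0 < \<tau>\<close> part_cover w_pos by (intro sketch_residual_partition_sampling) auto
  also have "\<dots> \<le> real n / real \<tau> * Max ((\<lambda>C. \<Sum>i\<in>C. w i) ` G)"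
    using n_pos P part_size \<open>0 < \<tau>\<close> w_pos by (intro lambda_max_partition_residual_mat_le) auto
  finally show ?thesis
    unfolding W .
qed

end
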